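(* Let $A$ be a nonempty finite set of $n$ alternatives. A choice rule $C$ on $A$ is (capacity-constrained) lexicographic if and only if it satisfies capacity-filling, gross substitutes, monotonicity, and the irrelevance of accepted alternatives.
   Context: Let $\mathcal{A}$ be the set of all nonempty subsets of $A$. A (capacity-constrained) choice rule is a map $C$ assigning to each problem $(S,q)\in\mathcal{A}\times\{1,\dots,n\}$ a nonempty set $C(S,q)\subseteq S$ with $|C(S,q)|\le q$; write $R(S,q)=S\setminus C(S,q)$ for the rejected alternatives. A priority ordering is a complete, transitive and antisymmetric binary relation on $A$; a priority profile is an ordered list $(\succ_1,\dots,\succ_n)$ of $n$ priority orderings. $C$ is (capacity-constrained) lexicographic for $(\succ_1,\dots,\succ_n)$ if for every $(S,q)$, $C(S,q)$ is the set obtained by choosing the $\succ_1$-highest alternative in $S$, then the $\succ_2$-highest alternative among the remaining alternatives of $S$, and so on, until $q$ alternatives have been chosen or no alternative is left. $C$ is (capacity-constrained) lexicographic if it is lexicographic for some priority profile. Capacity-filling: for each $(S,q)$, $|C(S,q)|=\min\{|S|,q\}$. Gross substitutes: for each $(S,q)$ and each $a,b\in S$ with $a\neq b$, if $a\in C(S,q)$ then $a\in C(S\setminus\{b\},q)$. Monotonicity: for each $S\in\mathcal{A}$ and $q\in\{1,\dots,n-1\}$, $C(S,q)\subseteq C(S,q+1)$. Irrelevance of accepted alternatives: for each $S,S'\in\mathcal{A}$ and $q\in\{1,\dots,n-1\}$, if $R(S,q)=R(S',q)$ then $C(S,q+1)\cap R(S,q)=C(S',q+1)\cap R(S',q)$.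 *)

theory Defs
  imports Main
begin

text \<open>Alternatives form a finite nonempty set A; n = card A.
  A choice rule is C :: 'a set => nat => 'a set; only its values on problems
  (S,q) with S a nonempty subset of A and 1 <= q <= n matter.\<close>

definition problem :: "'a set \<Rightarrow> 'a set \<Rightarrow> nat \<Rightarrow> bool" where
  "problem A S q \<longleftrightarrow> S \<noteq> {} \<and> S \<subseteq> A \<and> 1 \<le> q \<and> q \<le> card A"

definition choice_rule :: "'a set \<Rightarrow> ('a set \<Rightarrow> nat \<Rightarrow> 'a set) \<Rightarrow> bool" where
  "choice_rule A C \<longleftrightarrow> (\<forall>S q. problem A S q \<longrightarrow>
      C S q \<noteq> {} \<and> C S q \<subseteq> S \<and> card (C S q) \<le> q)"

definition rejected :: "('a set \<Rightarrow> nat \<Rightarrow> 'a set) \<Rightarrow> 'a set \<Rightarrow> nat \<Rightarrow> 'a set" where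
  "rejected C S q = S - C S q"

text \<open>A priority ordering on A: complete, transitive, antisymmetric relation on A.
  (x,y) \<in> r means x has (weakly) higher priority than y.\<close>
definition priority_ordering :: "'a set \<Rightarrow> 'a rel \<Rightarrow> bool" where
  "priority_ordering A r \<longleftrightarrow> r \<subseteq> A \<times> A \<and> (\<forall>x\<in>A. \<forall>y\<in>A. (x, y) \<in> r \<or> (y, x) \<in> r)
     \<and> trans r \<and> antisym r"

definition highest :: "'a rel \<Rightarrow> 'a set \<Rightarrow> 'a" where
  "highest r S = (THE x. x \<in> S \<and> (\<forall>y\<in>S. (x, y) \<in> r))"

fun lex_choose :: "'a rel list \<Rightarrow> 'a set \<Rightarrow> 'a set" where
  "lex_choose [] S = {}"
| "lex_choose (r # rs) S =
     (if S = {} then {} else insert (highest r S) (lex_choose rs (S - {highest r S})))"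

definition lexicographic_for :: "'a set \<Rightarrow> 'a rel list \<Rightarrow> ('a set \<Rightarrow> nat \<Rightarrow> 'a set) \<Rightarrow> bool" where
  "lexicographic_for A ps C \<longleftrightarrow>
     (\<forall>S q. problem A S q \<longrightarrow> C S q = lex_choose (take q ps) S)"

definition lexicographic :: "'a set \<Rightarrow> ('a set \<Rightarrow> nat \<Rightarrow> 'a set) \<Rightarrow> bool" where
  "lexicographic A C \<longleftrightarrow> (\<exists>ps. length ps = card A \<and> (\<forall>r\<in>set ps. priority_ordering A r)
      \<and> lexicographic_for A ps C)"

definition capacity_filling :: "'a set \<Rightarrow> ('a set \<Rightarrow> nat \<Rightarrow> 'a set) \<Rightarrow> bool" where
  "capacity_filling A C \<longleftrightarrow> (\<forall>S q. problem A S q \<longrightarrow> card (C S q) = min (card S) q)"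

definition gross_substitutes :: "'a set \<Rightarrow> ('a set \<Rightarrow> nat \<Rightarrow> 'a set) \<Rightarrow> bool" where
  "gross_substitutes A C \<longleftrightarrow> (\<forall>S q a b. problem A S q \<longrightarrow> a \<in> S \<longrightarrow> b \<in> S \<longrightarrow> a \<noteq> b \<longrightarrow>
      a \<in> C S q \<longrightarrow> a \<in> C (S - {b}) q)"

definition monotonicity :: "'a set \<Rightarrow> ('a set \<Rightarrow> nat \<Rightarrow> 'a set) \<Rightarrow> bool" where
  "monotonicity A C \<longleftrightarrow> (\<forall>S q. S \<noteq> {} \<longrightarrow> S \<subseteq> A \<longrightarrow> 1 \<le> q \<longrightarrow> q \<le> card A - 1 \<longrightarrow>
      C S q \<subseteq> C S (q + 1))"

definition irrelevance_of_accepted :: "'a set \<Rightarrow> ('a set \<Rightarrow> nat \<Rightarrow> 'a set) \<Rightarrow> bool" where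
  "irrelevance_of_accepted A C \<longleftrightarrow> (\<forall>S S' q. S \<noteq> {} \<longrightarrow> S \<subseteq> A \<longrightarrow> S' \<noteq> {} \<longrightarrow> S' \<subseteq> A \<longrightarrow>
      1 \<le> q \<longrightarrow> q \<le> card A - 1 \<longrightarrow> rejected C S q = rejected C S' q \<longrightarrow>
      C S (q + 1) \<inter> rejected C S q = C S' (q + 1) \<inter> rejected C S' q)"

end

theory Submission
  imports Defs
begin

text \<open>A lexicographic rule satisfies the four axioms because its choice at capacity q + 1
  adds to its choice at capacity q the alternative that the (q+1)-st priority ranks highest
  among the rejected ones, and this depends on the rejected set only.

  Conversely, let K(k) be the set chosen from A at capacity k. For a menu T disjoint from
  K(k), gross substitutes and capacity filling force T \<union> K(k) to be filled by K(k) at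
  capacity k, and by monotonicity capacity k + 1 adds exactly one alternative of T. This
  single-valued choice satisfies Sen's condition \<alpha>, so it is the top alternative of a
  priority ordering. The rejected set of any menu at capacity k is disjoint from K(k), and
  irrelevance of accepted alternatives transfers the choice at capacity k + 1 from that
  menu to T \<union> K(k); induction on the capacity then shows that C is lexicographic for these
  priorities.\<close>

section \<open>Priority orderings and lexicographic choice\<close>

lemma priority_ordering_refl: "priority_ordering A r \<Longrightarrow> x \<in> A \<Longrightarrow> (x, x) \<in> r"
  unfolding priority_ordering_def by blast

lemma highest_eqI:
  assumes "antisym r" and "x \<in> X" and "\<And>y. y \<in> X \<Longrightarrow> (x, y) \<in> r"
  shows "highest r X = x"
  unfolding highest_def
proof (rule the_equality)
  fix y assume "y \<in> X \<and> (\<forall>z\<in>X. (y, z) \<in> r)"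
  with assms show "y = x" by (auto dest: antisymD)
qed (use assms in blast)

lemma priority_ordering_has_greatest:
  assumes po: "priority_ordering A r" and "finite X" "X \<noteq> {}" "X \<subseteq> A"
  shows "\<exists>x\<in>X. \<forall>y\<in>X. (x, y) \<in> r"
  using assms(2-4)
proof (induction X rule: finite_ne_induct)
  case (singleton x)
  then show ?case using priority_ordering_refl[OF po] by auto
next
  case (insert x F)
  then obtain m where m: "m \<in> F" "\<forall>y\<in>F. (m, y) \<in> r" by auto
  have "x \<in> A" "m \<in> A" using insert m by auto
  with po consider "(m, x) \<in> r" | "(x, m) \<in> r" unfolding priority_ordering_def by blast
  then show ?case
  proof cases
    case 1
    then show ?thesis using m by auto
  next
    case 2
    then have "\<forall>y\<in>F. (x, y) \<in> r" using m po unfolding priority_ordering_def trans_def by blast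
    then show ?thesis using priority_ordering_refl[OF po \<open>x \<in> A\<close>] by auto
  qed
qed

lemma highest_greatest:
  assumes po: "priority_ordering A r" and "finite X" "X \<noteq> {}" "X \<subseteq> A"
  shows highest_in: "highest r X \<in> X"
    and highest_dominates: "y \<in> X \<Longrightarrow> (highest r X, y) \<in> r"
proof -
  obtain x where x: "x \<in> X" "\<forall>y\<in>X. (x, y) \<in> r"
    using priority_ordering_has_greatest[OF assms] by blast
  moreover have "antisym r" using po unfolding priority_ordering_def by blast
  ultimately have "highest r X = x" by (blast intro: highest_eqI)
  with x show "highest r X \<in> X" and "y \<in> X \<Longrightarrow> (highest r X, y) \<in> r" by auto
qed

lemma lex_choose_subset:
  assumes "\<forall>r\<in>set rs. priority_ordering A r" and "finite S" and "S \<subseteq> A"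
  shows "lex_choose rs S \<subseteq> S"
  using assms
proof (induction rs arbitrary: S)
  case (Cons r rs)
  then show ?case
    using highest_in[of A r S] Cons.IH[of "S - {highest r S}"] by auto
qed simp

lemma card_lex_choose:
  assumes "\<forall>r\<in>set rs. priority_ordering A r" and "finite S" and "S \<subseteq> A"
  shows "card (lex_choose rs S) = min (card S) (length rs)"
  using assms
proof (induction rs arbitrary: S)
  case (Cons r rs)
  show ?case
  proof (cases "S = {}")
    case False
    let ?h = "highest r S"
    have h: "?h \<in> S" using highest_in[of A r S] Cons.prems False by auto
    have "lex_choose rs (S - {?h}) \<subseteq> S - {?h}"
      using lex_choose_subset[of rs A "S - {?h}"] Cons.prems by auto
    then have "?h \<notin> lex_choose rs (S - {?h})" and "finite (lex_choose rs (S - {?h}))"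
      using Cons.prems(2) by (auto intro: finite_subset)
    then have "card (lex_choose (r # rs) S) = Suc (card (lex_choose rs (S - {?h})))"
      using False by simp
    also have "\<dots> = Suc (min (card S - 1) (length rs))"
      using Cons.IH[of "S - {?h}"] Cons.prems h by auto
    moreover have "card S > 0" using False Cons.prems(2) by (simp add: card_gt_0_iff)
    ultimately show ?thesis by simp
  qed simp
qed simp

text \<open>If the first priority's top alternative of S lies in T, it is also the top of T;
  otherwise it differs from x. Either way the remaining menus stay nested.\<close>
lemma lex_choose_antimono:
  assumes "\<forall>r\<in>set rs. priority_ordering A r" and "finite S" and "S \<subseteq> A"
    and "T \<subseteq> S" and "x \<in> T" and "x \<in> lex_choose rs S"
  shows "x \<in> lex_choose rs T"
  using assms
proof (induction rs arbitrary: S T)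
  case (Cons r rs)
  have po: "priority_ordering A r" using Cons.prems(1) by simp
  have ne: "S \<noteq> {}" "T \<noteq> {}" using Cons.prems(4,5) by auto
  let ?h = "highest r S" and ?h' = "highest r T"
  have top: "?h' = ?h" if "?h \<in> T"
  proof (rule highest_eqI)
    show "antisym r" using po unfolding priority_ordering_def by blast
    show "\<And>y. y \<in> T \<Longrightarrow> (?h, y) \<in> r"
      using highest_dominates[OF po Cons.prems(2) ne(1) Cons.prems(3)] Cons.prems(4) by blast
  qed (fact that)
  show ?case
  proof (cases "x = ?h'")
    case False
    have "x \<noteq> ?h" using False top Cons.prems(5) by auto
    then have "x \<in> lex_choose rs (S - {?h})" using Cons.prems(6) ne by simp
    moreover have "T - {?h'} \<subseteq> S - {?h}" using top Cons.prems(4) by (cases "?h \<in> T") auto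
    ultimately have "x \<in> lex_choose rs (T - {?h'})"
      using Cons.IH[of "S - {?h}" "T - {?h'}"] Cons.prems False by auto
    then show ?thesis using ne by simp
  qed (use ne in simp)
qed simp

lemma lex_choose_snoc:
  "lex_choose (rs @ [r]) S = lex_choose rs S \<union>
     (if S - lex_choose rs S = {} then {} else {highest r (S - lex_choose rs S)})"
proof (induction rs arbitrary: S)
  case (Cons r' rs)
  have "S - insert (highest r' S) (lex_choose rs (S - {highest r' S}))
      = S - {highest r' S} - lex_choose rs (S - {highest r' S})" by blast
  then show ?case using Cons.IH[of "S - {highest r' S}"] by auto
qed auto

lemma lexicographic_forD:
  "lexicographic_for A ps C \<Longrightarrow> S \<noteq> {} \<Longrightarrow> S \<subseteq> A \<Longrightarrow> 1 \<le> q \<Longrightarrow> q \<le> card A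
    \<Longrightarrow> C S q = lex_choose (take q ps) S"
  unfolding lexicographic_for_def problem_def by blast

lemma lexicographic_for_Suc:
  assumes lex: "lexicographic_for A ps C" and len: "length ps = card A"
    and S: "S \<noteq> {}" "S \<subseteq> A" and q: "1 \<le> q" "q < card A"
  shows "C S (Suc q) = C S q \<union>
    (if rejected C S q = {} then {} else {highest (ps ! q) (rejected C S q)})"
proof -
  have "take (Suc q) ps = take q ps @ [ps ! q]"
    using q len by (simp add: take_Suc_conv_app_nth)
  moreover have "C S q = lex_choose (take q ps) S" "C S (Suc q) = lex_choose (take (Suc q) ps) S"
    using lexicographic_forD[OF lex S] q by auto
  ultimately show ?thesis unfolding rejected_def by (simp add: lex_choose_snoc)
qed

lemma lexicographic_capacity_filling:
  assumes fin: "finite A" and "lexicographic A C"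
  shows "capacity_filling A C"
  unfolding capacity_filling_def
proof (intro allI impI)
  fix S q assume "problem A S q"
  then have S: "S \<noteq> {}" "S \<subseteq> A" and q: "1 \<le> q" "q \<le> card A"
    unfolding problem_def by auto
  obtain ps where len: "length ps = card A" and "\<forall>r\<in>set ps. priority_ordering A r"
    and lex: "lexicographic_for A ps C"
    using assms(2) unfolding lexicographic_def by blast
  then have "\<forall>r\<in>set (take q ps). priority_ordering A r" by (auto dest: in_set_takeD)
  then have "card (lex_choose (take q ps) S) = min (card S) q"
    using card_lex_choose[of "take q ps" A S] S q len fin by (auto intro: finite_subset)
  then show "card (C S q) = min (card S) q"
    using lexicographic_forD[OF lex S q] by simp
qed

lemma lexicographic_gross_substitutes:
  assumes "finite A" and "lexicographic A C"
  shows "gross_substitutes A C"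
  unfolding gross_substitutes_def
proof (intro allI impI)
  fix S q a b
  assume p: "problem A S q" and "a \<in> S" "b \<in> S" "a \<noteq> b" and a: "a \<in> C S q"
  obtain ps where "\<forall>r\<in>set ps. priority_ordering A r" and lex: "lexicographic_for A ps C"
    using assms(2) unfolding lexicographic_def by blast
  then have "\<forall>r\<in>set (take q ps). priority_ordering A r" by (auto dest: in_set_takeD)
  moreover have "problem A (S - {b}) q" using p \<open>a \<in> S\<close> \<open>a \<noteq> b\<close> unfolding problem_def by auto
  ultimately show "a \<in> C (S - {b}) q"
    using lex_choose_antimono[of "take q ps" A S "S - {b}" a] lex p a \<open>a \<in> S\<close> \<open>a \<noteq> b\<close> assms(1)
    unfolding lexicographic_for_def problem_def by (auto intro: finite_subset)
qed

lemma lexicographic_monotonicity: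
  assumes "lexicographic A C"
  shows "monotonicity A C"
proof -
  obtain ps where "length ps = card A" "lexicographic_for A ps C"
    using assms unfolding lexicographic_def by blast
  then show ?thesis
    unfolding monotonicity_def using lexicographic_for_Suc[of A ps C] by auto
qed

lemma lexicographic_irrelevance_of_accepted:
  assumes fin: "finite A" and "lexicographic A C"
  shows "irrelevance_of_accepted A C"
proof -
  obtain ps where len: "length ps = card A" and po: "\<forall>r\<in>set ps. priority_ordering A r"
    and lex: "lexicographic_for A ps C"
    using assms(2) unfolding lexicographic_def by blast
  have step: "C S (Suc q) \<inter> rejected C S q =
      (if rejected C S q = {} then {} else {highest (ps ! q) (rejected C S q)})"
    if S: "S \<noteq> {}" "S \<subseteq> A" and q: "1 \<le> q" "q < card A" for S q
  proof -
    have "priority_ordering A (ps ! q)" using po len q by simp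
    moreover have "finite (rejected C S q)" "rejected C S q \<subseteq> A"
      using S fin unfolding rejected_def by (auto intro: finite_subset)
    ultimately have "rejected C S q \<noteq> {} \<Longrightarrow> highest (ps ! q) (rejected C S q) \<in> rejected C S q"
      using highest_in by metis
    then show ?thesis
      using lexicographic_for_Suc[OF lex len S q] unfolding rejected_def by auto
  qed
  show ?thesis
    unfolding irrelevance_of_accepted_def
  proof (intro allI impI)
    fix S S' q
    assume "S \<noteq> {}" "S \<subseteq> A" "S' \<noteq> {}" "S' \<subseteq> A" "1 \<le> q" "q \<le> card A - 1"
      and "rejected C S q = rejected C S' q"
    then show "C S (q + 1) \<inter> rejected C S q = C S' (q + 1) \<inter> rejected C S' q"
      using step[of S q] step[of S' q] by simp
  qed
qed

section \<open>The axioms determine the priorities\<close>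

lemma gross_substitutes_subset:
  assumes gs: "gross_substitutes A C" and fin: "finite A"
    and "S \<subseteq> A" "T \<subseteq> S" "x \<in> T" "x \<in> C S q" "1 \<le> q" "q \<le> card A"
  shows "x \<in> C T q"
proof -
  have "x \<in> C (S - D) q" if "finite D" "D \<subseteq> S" "x \<notin> D" for D
    using that
  proof (induction D rule: finite_induct)
    case (insert d D)
    then have "problem A (S - D) q" "x \<in> S - D" "d \<in> S - D" "x \<noteq> d" "x \<in> C (S - D) q"
      using assms unfolding problem_def by auto
    then have "x \<in> C (S - D - {d}) q"
      using gs unfolding gross_substitutes_def by blast
    moreover have "S - insert d D = S - D - {d}" by blast
    ultimately show ?case by simp
  qed (use assms in simp)
  moreover have "finite (S - T)" using fin assms(3) by (auto intro: finite_subset)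
  moreover have "S - (S - T) = T" using assms(4) by blast
  ultimately show ?thesis using assms(5) by (metis Diff_iff Diff_subset)
qed

definition contraction_consistent_on :: "'a set \<Rightarrow> ('a set \<Rightarrow> 'a) \<Rightarrow> bool" where
  "contraction_consistent_on B f \<longleftrightarrow>
     (\<forall>T. T \<noteq> {} \<longrightarrow> T \<subseteq> B \<longrightarrow> f T \<in> T) \<and>
     (\<forall>T T'. T \<subseteq> B \<longrightarrow> T' \<subseteq> T \<longrightarrow> f T \<in> T' \<longrightarrow> f T' = f T)"

lemma contraction_consistent_onI:
  assumes "\<And>T. T \<noteq> {} \<Longrightarrow> T \<subseteq> B \<Longrightarrow> f T \<in> T"
    and "\<And>T T'. T \<subseteq> B \<Longrightarrow> T' \<subseteq> T \<Longrightarrow> f T \<in> T' \<Longrightarrow> f T' = f T"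
  shows "contraction_consistent_on B f"
  using assms unfolding contraction_consistent_on_def by blast

lemma contraction_consistent_onD:
  assumes "contraction_consistent_on B f"
  shows "T \<noteq> {} \<Longrightarrow> T \<subseteq> B \<Longrightarrow> f T \<in> T"
    and "T \<subseteq> B \<Longrightarrow> T' \<subseteq> T \<Longrightarrow> f T \<in> T' \<Longrightarrow> f T' = f T"
  using assms unfolding contraction_consistent_on_def by blast+

text \<open>The rationalizing ordering ranks x above y iff f picks x from the pair {x, y}.\<close>
lemma contraction_consistent_on_highest:
  assumes f: "contraction_consistent_on A f"
  obtains r where "priority_ordering A r"
    and "\<And>T. T \<noteq> {} \<Longrightarrow> T \<subseteq> A \<Longrightarrow> highest r T = f T"
proof
  define r where "r = {(x, y). x \<in> A \<and> y \<in> A \<and> f {x, y} = x}"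
  note mem = contraction_consistent_onD(1)[OF f] and contract = contraction_consistent_onD(2)[OF f]
  have "antisym r" unfolding r_def antisym_def by (auto simp: insert_commute)
  have "trans r"
  proof (rule transI)
    fix x y z assume "(x, y) \<in> r" "(y, z) \<in> r"
    then have A: "{x, y, z} \<subseteq> A" and "f {x, y} = x" "f {y, z} = y" unfolding r_def by auto
    moreover have "f {x, y, z} \<in> {x, y, z}" using mem[OF _ A] by blast
    ultimately consider "f {x, y, z} = x" | "x = y" | "y = z"
      using contract[OF A, of "{x, y}"] contract[OF A, of "{y, z}"] by fastforce
    then show "(x, z) \<in> r"
    proof cases
      case 1
      then have "f {x, z} = x" using contract[OF A, of "{x, z}"] by auto
      then show ?thesis using A unfolding r_def by auto
    qed (use \<open>(x, y) \<in> r\<close> \<open>(y, z) \<in> r\<close> in auto)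
  qed
  moreover have "(x, y) \<in> r \<or> (y, x) \<in> r" if "x \<in> A" "y \<in> A" for x y
    using mem[of "{x, y}"] that unfolding r_def by (auto simp: insert_commute)
  ultimately show "priority_ordering A r"
    using \<open>antisym r\<close> unfolding priority_ordering_def r_def by blast
  fix T assume T: "T \<noteq> {}" "T \<subseteq> A"
  show "highest r T = f T"
  proof (rule highest_eqI[OF \<open>antisym r\<close>])
    show "f T \<in> T" using mem[OF T] .
    fix y assume "y \<in> T"
    then have "f {f T, y} = f T" using contract[OF T(2), of "{f T, y}"] \<open>f T \<in> T\<close> by auto
    then show "(f T, y) \<in> r" using \<open>y \<in> T\<close> \<open>f T \<in> T\<close> T unfolding r_def by auto
  qed
qed

definition prioritize :: "'a set \<Rightarrow> ('a set \<Rightarrow> 'a) \<Rightarrow> ('a set \<Rightarrow> 'a) \<Rightarrow> 'a set \<Rightarrow> 'a" where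
  "prioritize B f g T = (if T \<inter> B \<noteq> {} then f (T \<inter> B) else g T)"

lemma contraction_consistent_on_prioritize:
  assumes f: "contraction_consistent_on B f" and g: "contraction_consistent_on A g"
  shows "contraction_consistent_on A (prioritize B f g)"
proof (rule contraction_consistent_onI)
  have f_mem: "T \<inter> B \<noteq> {} \<Longrightarrow> f (T \<inter> B) \<in> T \<inter> B" for T
    by (rule contraction_consistent_onD(1)[OF f]) auto
  fix T
  show "T \<noteq> {} \<Longrightarrow> T \<subseteq> A \<Longrightarrow> prioritize B f g T \<in> T"
    using f_mem[of T] contraction_consistent_onD(1)[OF g] unfolding prioritize_def by auto
  fix T' assume T: "T \<subseteq> A" "T' \<subseteq> T" "prioritize B f g T \<in> T'"
  show "prioritize B f g T' = prioritize B f g T"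
  proof (cases "T \<inter> B = {}")
    case True
    then have "T' \<inter> B = {}" using T(2) by blast
    then show ?thesis
      using True contraction_consistent_onD(2)[OF g T(1,2)] T(3) unfolding prioritize_def by simp
  next
    case False
    then have "f (T \<inter> B) \<in> T' \<inter> B" using f_mem[of T] T(3) unfolding prioritize_def by auto
    moreover have "T' \<inter> B \<subseteq> T \<inter> B" using T(2) by blast
    ultimately show ?thesis
      using contraction_consistent_onD(2)[OF f, of "T \<inter> B" "T' \<inter> B"] False
      unfolding prioritize_def by auto
  qed
qed

locale monotone_substitutable_rule =
  fixes A :: "'a set" and C :: "'a set \<Rightarrow> nat \<Rightarrow> 'a set"
  assumes finite_A: "finite A" and A_nonempty: "A \<noteq> {}" and choice: "choice_rule A C"
    and filling: "capacity_filling A C" and substitutes: "gross_substitutes A C"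
    and monotone: "monotonicity A C" and irrelevance: "irrelevance_of_accepted A C"
begin

lemma C_subset: "S \<noteq> {} \<Longrightarrow> S \<subseteq> A \<Longrightarrow> 1 \<le> q \<Longrightarrow> q \<le> card A \<Longrightarrow> C S q \<subseteq> S"
  using choice unfolding choice_rule_def problem_def by blast

lemma card_C: "S \<noteq> {} \<Longrightarrow> S \<subseteq> A \<Longrightarrow> 1 \<le> q \<Longrightarrow> q \<le> card A \<Longrightarrow> card (C S q) = min (card S) q"
  using filling unfolding capacity_filling_def problem_def by blast

lemma C_Suc_mono: "S \<noteq> {} \<Longrightarrow> S \<subseteq> A \<Longrightarrow> 1 \<le> q \<Longrightarrow> q < card A \<Longrightarrow> C S q \<subseteq> C S (Suc q)"
  using monotone unfolding monotonicity_def by simp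

lemma C_antimono: "S \<subseteq> A \<Longrightarrow> T \<subseteq> S \<Longrightarrow> x \<in> T \<Longrightarrow> x \<in> C S q \<Longrightarrow> 1 \<le> q \<Longrightarrow> q \<le> card A \<Longrightarrow> x \<in> C T q"
  using gross_substitutes_subset[OF substitutes finite_A] by blast

text \<open>Capacity 0 is not a problem, so C A 0 is a junk value and is replaced by the empty set.\<close>
definition accepted :: "nat \<Rightarrow> 'a set" where
  "accepted k = (if k = 0 then {} else C A k)"

text \<open>On a menu T of alternatives not accepted at capacity k, filling capacity k with
  accepted k leaves exactly one further slot at capacity k + 1; its occupant is the
  choice of the (k+1)-st priority from T.\<close>
definition pick :: "nat \<Rightarrow> 'a set \<Rightarrow> 'a" where
  "pick k T = the_elem (C (T \<union> accepted k) (Suc k) \<inter> T)"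

lemma accepted_subset: "k \<le> card A \<Longrightarrow> accepted k \<subseteq> A"
  using C_subset[OF A_nonempty] unfolding accepted_def by simp

lemma card_accepted: "k \<le> card A \<Longrightarrow> card (accepted k) = k"
  using card_C[OF A_nonempty] unfolding accepted_def by simp

lemma C_extend_accepted:
  assumes k: "1 \<le> k" "k \<le> card A" and T: "T \<subseteq> A - accepted k"
  shows "C (T \<union> accepted k) k = accepted k"
proof -
  let ?S = "T \<union> accepted k"
  have S: "?S \<noteq> {}" "?S \<subseteq> A" using k T accepted_subset card_accepted[OF k(2)] by auto
  have "finite (C ?S k)" using C_subset[OF S k] S(2) finite_A by (auto intro: finite_subset)
  moreover have "accepted k \<subseteq> C ?S k"
    using C_antimono[OF subset_refl _ _ _ k] S k unfolding accepted_def by auto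
  moreover have "card (C ?S k) \<le> card (accepted k)"
    using card_C[OF S k] card_accepted[OF k(2)] by simp
  ultimately show ?thesis by (rule card_seteq[symmetric])
qed

lemma C_Suc_extend_accepted:
  assumes k: "k < card A" and T: "T \<noteq> {}" "T \<subseteq> A - accepted k"
  shows "C (T \<union> accepted k) (Suc k) \<inter> T = {pick k T}"
proof -
  let ?S = "T \<union> accepted k"
  have S: "?S \<noteq> {}" "?S \<subseteq> A" using k T accepted_subset by auto
  have fin: "finite T" "finite (accepted k)" using S(2) finite_A by (auto intro: finite_subset)
  have disj: "T \<inter> accepted k = {}" using T by blast
  have "card ?S \<ge> Suc k"
    using card_Un_disjoint[OF fin disj] card_accepted k T fin by (simp add: Suc_le_eq card_gt_0_iff)
  then have card_Suc: "card (C ?S (Suc k)) = Suc k" using card_C[OF S] k by simp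
  have "accepted k \<subseteq> C ?S (Suc k)"
  proof (cases "k = 0")
    case False
    then show ?thesis
      using C_extend_accepted[of k T] C_Suc_mono[OF S, of k] k T by simp
  qed (simp add: accepted_def)
  moreover have "C ?S (Suc k) \<subseteq> ?S" using C_subset[OF S] k by simp
  ultimately have "C ?S (Suc k) \<inter> T = C ?S (Suc k) - accepted k"
    and "card (C ?S (Suc k) - accepted k) = 1"
    using disj card_Suc card_accepted k fin by (auto simp: card_Diff_subset)
  then obtain x where "C ?S (Suc k) \<inter> T = {x}" by (auto simp: card_1_singleton_iff)
  then show ?thesis unfolding pick_def by simp
qed

lemma pick_contraction_consistent:
  assumes k: "k < card A"
  shows "contraction_consistent_on (A - accepted k) (pick k)"
proof (rule contraction_consistent_onI)
  show "pick k T \<in> T" if "T \<noteq> {}" "T \<subseteq> A - accepted k" for T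
    using C_Suc_extend_accepted[OF k that] by auto
  fix T T' assume T: "T \<subseteq> A - accepted k" "T' \<subseteq> T" "pick k T \<in> T'"
  then have T': "T' \<noteq> {}" "T' \<subseteq> A - accepted k" by auto
  have "pick k T \<in> C (T \<union> accepted k) (Suc k)"
    using C_Suc_extend_accepted[OF k _ T(1)] T(2) T' by blast
  moreover have "T \<union> accepted k \<subseteq> A" using T(1) accepted_subset[of k] k by auto
  ultimately have "pick k T \<in> C (T' \<union> accepted k) (Suc k)"
    using C_antimono[of "T \<union> accepted k" "T' \<union> accepted k" "pick k T" "Suc k"] T k by auto
  then have "pick k T \<in> C (T' \<union> accepted k) (Suc k) \<inter> T'" using T(3) by blast
  then show "pick k T' = pick k T" unfolding C_Suc_extend_accepted[OF k T'] by simp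
qed

lemma rejected_subset: "S \<subseteq> A \<Longrightarrow> 1 \<le> q \<Longrightarrow> q \<le> card A \<Longrightarrow> rejected C S q \<subseteq> A - accepted q"
  using C_antimono[of A S] unfolding rejected_def accepted_def by auto

lemma C_one:
  assumes "S \<noteq> {}" "S \<subseteq> A"
  shows "C S 1 = {pick 0 S}"
proof -
  have "0 < card A" using A_nonempty finite_A by (simp add: card_gt_0_iff)
  then show ?thesis
    using C_Suc_extend_accepted[of 0 S] C_subset[of S 1] assms unfolding accepted_def by auto
qed

text \<open>By irrelevance of accepted alternatives, S may be replaced by
  rejected C S q \<union> accepted q, which has the same rejected set at capacity q.\<close>
lemma C_Suc:
  assumes S: "S \<noteq> {}" "S \<subseteq> A" and q: "1 \<le> q" "q < card A"
  shows "C S (Suc q) = C S q \<union>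
    (if rejected C S q = {} then {} else {pick q (rejected C S q)})"
proof -
  let ?R = "rejected C S q"
  have mono: "C S q \<subseteq> C S (Suc q)" "C S (Suc q) \<subseteq> S"
    using C_Suc_mono[OF S q] C_subset[OF S] q by auto
  show ?thesis
  proof (cases "?R = {}")
    case True
    then show ?thesis using mono unfolding rejected_def by auto
  next
    case False
    let ?S' = "?R \<union> accepted q"
    have R: "?R \<subseteq> A - accepted q" using rejected_subset S q by simp
    then have "C ?S' q = accepted q" using C_extend_accepted q by simp
    then have "rejected C ?S' q = ?R" using R unfolding rejected_def by auto
    moreover have "?S' \<noteq> {}" "?S' \<subseteq> A" using False R accepted_subset[of q] q by auto
    moreover have "q \<le> card A - 1" using q by simp
    ultimately have "C S (q + 1) \<inter> ?R = C ?S' (q + 1) \<inter> ?R"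
      using irrelevance S q(1) unfolding irrelevance_of_accepted_def by metis
    also have "\<dots> = {pick q ?R}" using C_Suc_extend_accepted[OF q(2) False R] by simp
    finally show ?thesis using mono False unfolding rejected_def by auto
  qed
qed

lemma priorities_exist:
  obtains ps where "length ps = card A" and "\<forall>r\<in>set ps. priority_ordering A r"
    and "\<And>k T. k < card A \<Longrightarrow> T \<noteq> {} \<Longrightarrow> T \<subseteq> A - accepted k \<Longrightarrow> highest (ps ! k) T = pick k T"
proof -
  have "\<exists>r. priority_ordering A r \<and>
      (\<forall>T. T \<noteq> {} \<longrightarrow> T \<subseteq> A - accepted k \<longrightarrow> highest r T = pick k T)" if k: "k < card A" for k
  proof -
    have "contraction_consistent_on A (pick 0)"
      using pick_contraction_consistent[of 0] k unfolding accepted_def by simp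
    then have "contraction_consistent_on A (prioritize (A - accepted k) (pick k) (pick 0))"
      by (rule contraction_consistent_on_prioritize[OF pick_contraction_consistent[OF k]])
    then obtain r where "priority_ordering A r"
      and "\<And>T. T \<noteq> {} \<Longrightarrow> T \<subseteq> A \<Longrightarrow> highest r T = prioritize (A - accepted k) (pick k) (pick 0) T"
      using contraction_consistent_on_highest by blast
    moreover have "prioritize (A - accepted k) (pick k) (pick 0) T = pick k T"
      if "T \<noteq> {}" "T \<subseteq> A - accepted k" for T
      using that unfolding prioritize_def by (simp add: Int_absorb2)
    ultimately show ?thesis by (metis Diff_subset subset_trans)
  qed
  then obtain r where "\<And>k. k < card A \<Longrightarrow> priority_ordering A (r k) \<and>
      (\<forall>T. T \<noteq> {} \<longrightarrow> T \<subseteq> A - accepted k \<longrightarrow> highest (r k) T = pick k T)"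
    by metis
  then show thesis using that[of "map r [0..<card A]"] by auto
qed

theorem lexicographic: "lexicographic A C"
proof -
  obtain ps where len: "length ps = card A" and po: "\<forall>r\<in>set ps. priority_ordering A r"
    and top: "\<And>k T. k < card A \<Longrightarrow> T \<noteq> {} \<Longrightarrow> T \<subseteq> A - accepted k \<Longrightarrow> highest (ps ! k) T = pick k T"
    using priorities_exist by blast
  have "C S q = lex_choose (take q ps) S" if "1 \<le> q" "q \<le> card A" "S \<noteq> {}" "S \<subseteq> A" for S q
    using that
  proof (induction q arbitrary: S rule: nat_induct_at_least)
    case base
    then have "take 1 ps = [ps ! 0]" using len by (cases ps) auto
    moreover have "highest (ps ! 0) S = pick 0 S"
      using top[of 0 S] base unfolding accepted_def by simp
    ultimately show ?case using C_one[OF base(2,3)] base(2) by simp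
  next
    case (Suc q)
    have "take (Suc q) ps = take q ps @ [ps ! q]" using Suc len by (simp add: take_Suc_conv_app_nth)
    moreover have
      "rejected C S q \<noteq> {} \<Longrightarrow> highest (ps ! q) (rejected C S q) = pick q (rejected C S q)"
      using top[of q] rejected_subset[of S q] Suc by simp
    moreover have "C S q = lex_choose (take q ps) S" using Suc by simp
    ultimately show ?case
      using C_Suc[of S q] Suc lex_choose_snoc[of "take q ps" "ps ! q" S]
      unfolding rejected_def by auto
  qed
  then show ?thesis
    unfolding lexicographic_def lexicographic_for_def problem_def using len po by blast
qed

end

theorem theorem1:
  fixes A :: "'a set" and C :: "'a set \<Rightarrow> nat \<Rightarrow> 'a set"
  assumes "finite A" and "A \<noteq> {}" and "choice_rule A C"
  shows "lexicographic A C \<longleftrightarrow>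
    capacity_filling A C \<and> gross_substitutes A C \<and> monotonicity A C \<and> irrelevance_of_accepted A C"
    (is "_ \<longleftrightarrow> ?axioms")
proof
  assume "lexicographic A C"
  then show ?axioms
    by (intro conjI lexicographic_capacity_filling[OF assms(1)]
        lexicographic_gross_substitutes[OF assms(1)] lexicographic_monotonicity
        lexicographic_irrelevance_of_accepted[OF assms(1)])
next
  assume ?axioms
  then interpret monotone_substitutable_rule A C
    using assms by (intro monotone_substitutable_rule.intro) auto
  show "lexicographic A C" by (rule lexicographic)
qed

end
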